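(* Let $k\ge0$ be an integer, let $\mathcal H$ be a hypergraph, and let $\vec{\mathcal H}$ and $\vec{\mathcal H}'$ be two $k$-hyperarc-connected orientations of $\mathcal H$. Then there is a sequence $\vec{\mathcal H}=\vec{\mathcal H}_0,\vec{\mathcal H}_1,\ldots,\vec{\mathcal H}_\ell=\vec{\mathcal H}'$ of $k$-hyperarc-connected orientations of $\mathcal H$ such that for each $1\le i\le \ell$, $\vec{\mathcal H}_i$ arises from $\vec{\mathcal H}_{i-1}$ by reversing one directed hypercycle or one directed hyperpath of $\vec{\mathcal H}_{i-1}$.
   Context: A hypergraph $\mathcal H=(V,\mathcal E)$ consists of a finite vertex set $V$ and a finite multiset $\mathcal E$ of nonempty subsets of $V$ (hyperedges). Orienting a hyperedge $Z$ towards a vertex $v\in Z$ yields the hyperarc $(Z\setminus\{v\},v)$, with tail set $Z\setminus\{v\}$ and head $v$. An orientation $\vec{\mathcal H}$ of $\mathcal H$ is obtained by orienting every hyperedge (it is the multiset of resulting hyperarcs). For $\emptyset\ne X\subsetneq V$, the out-degree $d^+(X)$ is the number of hyperarcs $(Y,v)$ with $v\notin X$ and $Y\cap X\neq\emptyset$; $\vec{\mathcal H}$ is $k$-hyperarc-connected if $d^+(X)\ge k$ for every $\emptyset\neq X\subsetneq V$. For vertices $s,t$, an $(s,t)$-hyperpath is a sequence $(A_1,a_1),\ldots,(A_\ell,a_\ell)$ ($\ell\ge1$) of hyperarcs of the orientation with $s\in A_1$, $a_\ell=t$, $a_i\in A_{i+1}$ for $1\le i\le \ell-1$, and $a_1,\ldots,a_\ell$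 pairwise distinct; if $s=t$ it is called a directed hypercycle. Reversing such a hyperpath or hypercycle means, with $a_0:=s$, replacing each hyperarc $(A_i,a_i)$ by $((A_i\setminus\{a_{i-1}\})\cup\{a_i\},a_{i-1})$, for $i=1,\ldots,\ell$. *)

theory Defs
  imports Main "HOL-Library.Multiset"
begin

type_synonym 'v hyperarc = "'v set \<times> 'v"

definition hypergraph :: "'v set \<Rightarrow> 'v set multiset \<Rightarrow> bool" where
  "hypergraph V E \<longleftrightarrow> finite V \<and> (\<forall>Z\<in>#E. Z \<noteq> {} \<and> Z \<subseteq> V)"

text \<open>Orienting a hyperedge Z towards v in Z gives (Z - {v}, v); an orientation is the
  multiset of hyperarcs obtained by orienting every hyperedge.\<close>
definition is_orientation :: "'v set multiset \<Rightarrow> 'v hyperarc multiset \<Rightarrow> bool" where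
  "is_orientation E D \<longleftrightarrow>
     image_mset (\<lambda>(A, v). insert v A) D = E \<and> (\<forall>(A, v)\<in>#D. v \<notin> A)"

definition out_degree :: "'v hyperarc multiset \<Rightarrow> 'v set \<Rightarrow> nat" where
  "out_degree D X = size (filter_mset (\<lambda>(Y, v). v \<notin> X \<and> Y \<inter> X \<noteq> {}) D)"

definition k_hyperarc_connected :: "'v set \<Rightarrow> nat \<Rightarrow> 'v hyperarc multiset \<Rightarrow> bool" where
  "k_hyperarc_connected V k D \<longleftrightarrow> (\<forall>X. X \<noteq> {} \<and> X \<subset> V \<longrightarrow> out_degree D X \<ge> k)"

text \<open>(s,t)-hyperpath (a directed hypercycle when s = t) in orientation D.\<close>
definition hyperpath :: "'v hyperarc multiset \<Rightarrow> 'v \<Rightarrow> 'v \<Rightarrow> 'v hyperarc list \<Rightarrow> bool" where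
  "hyperpath D s t P \<longleftrightarrow>
     P \<noteq> [] \<and> set P \<subseteq> set_mset D \<and> s \<in> fst (P ! 0) \<and> snd (last P) = t \<and>
     (\<forall>i. i + 1 < length P \<longrightarrow> snd (P ! i) \<in> fst (P ! (i + 1))) \<and>
     distinct (map snd P)"

text \<open>Reversal: with a_0 = s, (A_i, a_i) becomes ((A_i - {a_(i-1)}) \<union> {a_i}, a_(i-1)).\<close>
definition reversed_arcs :: "'v \<Rightarrow> 'v hyperarc list \<Rightarrow> 'v hyperarc list" where
  "reversed_arcs s P = map2 (\<lambda>(A, a) p. ((A - {p}) \<union> {a}, p)) P (s # map snd P)"

definition reverse_step :: "'v hyperarc multiset \<Rightarrow> 'v hyperarc multiset \<Rightarrow> bool" where
  "reverse_step D D' \<longleftrightarrow>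
     (\<exists>s t P. hyperpath D s t P \<and> D' = D - mset P + mset (reversed_arcs s P))"

end

theory Submission
  imports Defs
begin

text \<open>Then \<open>d\<^sup>+(V - W) = heads_in D W - edges_within E W\<close>, so
  \<open>k\<close>-hyperarc-connectivity says \<open>heads_in D W \<ge> edges_within E W + k\<close> for all proper nonempty
  \<open>W\<close>; call \<open>W\<close> tight if equality holds. Reversing an \<open>(s, t)\<close>-hyperpath moves one head from
  \<open>t\<close> to \<open>s\<close>, so it can only break connectivity on a tight set containing \<open>t\<close> but not \<open>s\<close>.
  To move from \<open>D\<close> towards \<open>D'\<close>: if some \<open>s\<close> has fewer heads in \<open>D\<close> than in \<open>D'\<close>, uncrossing the
  tight sets avoiding \<open>s\<close> yields a vertex \<open>t\<close> with a surplus in \<open>D\<close> that no such tight set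
  contains, and reversing an \<open>(s, t)\<close>-hyperpath lowers the total in-degree deficit. Once all
  in-degrees agree, \<open>D - D'\<close> contains a hypercycle whose reversal lies in \<open>D' - D\<close>; reversing it
  keeps the in-degrees and shrinks \<open>D - D'\<close>. For \<open>k = 0\<close> single hyperarcs of \<open>D - D'\<close> can be
  reversed directly.\<close>

section \<open>Counting heads and hyperedges\<close>

definition heads_in :: "'v hyperarc multiset \<Rightarrow> 'v set \<Rightarrow> nat" where
  "heads_in D W = size {#a \<in># D. snd a \<in> W#}"

definition edges_within :: "'v set multiset \<Rightarrow> 'v set \<Rightarrow> nat" where
  "edges_within E W = size {#Z \<in># E. Z \<subseteq> W#}"

lemma heads_in_empty [simp]: "heads_in D {} = 0"
  unfolding heads_in_def by simp

lemma heads_in_plus [simp]: "heads_in (M + N) W = heads_in M W + heads_in N W"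
  unfolding heads_in_def by simp

lemma heads_in_pos_iff: "0 < heads_in M W \<longleftrightarrow> (\<exists>a\<in>#M. snd a \<in> W)"
  unfolding heads_in_def by (auto simp: nonempty_has_size[symmetric] filter_mset_eq_conv)

lemma heads_in_union_inter:
  "heads_in D W1 + heads_in D W2 = heads_in D (W1 \<inter> W2) + heads_in D (W1 \<union> W2)"
proof -
  have "{#a \<in># D. snd a \<in> W1#} + {#a \<in># D. snd a \<in> W2#}
      = {#a \<in># D. snd a \<in> W1 \<inter> W2#} + {#a \<in># D. snd a \<in> W1 \<union> W2#}"
    by (rule multiset_eqI) simp
  then show ?thesis unfolding heads_in_def by (metis size_union)
qed

lemma heads_in_sum_singletons:
  "finite W \<Longrightarrow> heads_in D W = (\<Sum>v\<in>W. heads_in D {v})"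
proof (induction W rule: finite_induct)
  case empty
  then show ?case by (simp add: heads_in_def)
next
  case (insert v W)
  then show ?case
    using heads_in_union_inter[of D "{v}" W] by (simp add: heads_in_def)
qed

lemma edges_within_supermodular:
  "edges_within E W1 + edges_within E W2 \<le> edges_within E (W1 \<inter> W2) + edges_within E (W1 \<union> W2)"
proof (induction E)
  case empty
  then show ?case by (simp add: edges_within_def)
next
  case (add Z E)
  have "\<And>W. edges_within (add_mset Z E) W = (if Z \<subseteq> W then 1 else 0) + edges_within E W"
    by (simp add: edges_within_def)
  moreover have "(if Z \<subseteq> W1 then 1 else 0) + (if Z \<subseteq> W2 then 1 else 0)
     \<le> (if Z \<subseteq> W1 \<inter> W2 then 1 else 0) + (if Z \<subseteq> W1 \<union> W2 then (1::nat) else 0)"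
    by auto
  ultimately show ?case using add by simp
qed

lemma is_orientationD:
  assumes "is_orientation E D" "(A, v) \<in># D"
  shows "v \<notin> A" "insert v A \<in># E"
proof -
  have tails: "\<forall>(A, v)\<in>#D. v \<notin> A" and edges: "image_mset (\<lambda>(A, v). insert v A) D = E"
    using assms(1) unfolding is_orientation_def by blast+
  show "v \<notin> A" using bspec[OF tails assms(2)] by simp
  show "insert v A \<in># E"
    using imageI[OF assms(2), of "\<lambda>(A, v). insert v A"] unfolding edges[symmetric] by simp
qed

lemma size_orientation: "is_orientation E D \<Longrightarrow> size D = size E"
  unfolding is_orientation_def by (metis size_image_mset)

lemma orientation_arc_in_vertices:
  assumes "hypergraph V E" "is_orientation E D" "(A, v) \<in># D"
  shows "v \<in> V" "A \<subseteq> V"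
proof -
  have "\<forall>Z\<in>#E. Z \<noteq> {} \<and> Z \<subseteq> V" using assms(1) unfolding hypergraph_def by simp
  from bspec[OF this is_orientationD(2)[OF assms(2,3)]] show "v \<in> V" "A \<subseteq> V" by simp_all
qed

lemma heads_in_inter_vertices:
  assumes "hypergraph V E" "is_orientation E D"
  shows "heads_in D W = heads_in D (W \<inter> V)"
proof -
  have "{#a \<in># D. snd a \<in> W#} = {#a \<in># D. snd a \<in> W \<inter> V#}"
    using orientation_arc_in_vertices(1)[OF assms] by (intro filter_mset_cong) (auto simp: split_paired_all)
  then show ?thesis unfolding heads_in_def by simp
qed

lemma heads_in_outside_vertices:
  assumes "hypergraph V E" "is_orientation E D" "v \<notin> V"
  shows "heads_in D {v} = 0"
  using heads_in_inter_vertices[OF assms(1,2), of "{v}"] assms(3) by simp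

lemma heads_in_vertices:
  assumes "hypergraph V E" "is_orientation E D"
  shows "heads_in D V = size E"
proof -
  have "{#a \<in># D. snd a \<in> V#} = D"
    using orientation_arc_in_vertices(1)[OF assms] by (auto simp: filter_mset_eq_conv split_paired_all)
  then show ?thesis using size_orientation[OF assms(2)] unfolding heads_in_def by simp
qed

lemma edges_within_orientation:
  "is_orientation E D \<Longrightarrow> edges_within E W = size {#(A, v) \<in># D. insert v A \<subseteq> W#}"
  unfolding is_orientation_def edges_within_def
  by (auto simp: filter_mset_image_mset case_prod_unfold)

text \<open>Every arc with head outside \<open>X\<close> either leaves \<open>X\<close> or lies entirely in \<open>V - X\<close>.\<close>
lemma out_degree_plus_edges_within:
  assumes "hypergraph V E" "is_orientation E D"
  shows "out_degree D X + edges_within E (V - X) = heads_in D (V - X)"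
proof -
  have partition: "{#(Y, v) \<in># D. v \<notin> X \<and> Y \<inter> X \<noteq> {}#} + {#(A, v) \<in># D. insert v A \<subseteq> V - X#}
      = {#a \<in># D. snd a \<in> V - X#}"
  proof (rule multiset_eqI)
    fix a
    show "count ({#(Y, v) \<in># D. v \<notin> X \<and> Y \<inter> X \<noteq> {}#} + {#(A, v) \<in># D. insert v A \<subseteq> V - X#}) a
        = count {#a \<in># D. snd a \<in> V - X#} a"
    proof (cases a)
      case (Pair A v)
      show ?thesis
      proof (cases "a \<in># D")
        case True
        then show ?thesis using orientation_arc_in_vertices[OF assms(1,2), of A v] Pair by auto
      qed (simp add: not_in_iff)
    qed
  qed
  show ?thesis
    unfolding out_degree_def edges_within_orientation[OF assms(2)] heads_in_def
    by (simp only: partition flip: size_union)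
qed

lemma k_hyperarc_connected_iff:
  assumes "hypergraph V E" "is_orientation E D"
  shows "k_hyperarc_connected V k D \<longleftrightarrow>
    (\<forall>W. W \<subseteq> V \<longrightarrow> W \<noteq> {} \<longrightarrow> W \<noteq> V \<longrightarrow> edges_within E W + k \<le> heads_in D W)"
proof (intro iffI allI impI)
  fix W assume kc: "k_hyperarc_connected V k D" and W: "W \<subseteq> V" "W \<noteq> {}" "W \<noteq> V"
  moreover have "V - W \<noteq> {}" "V - W \<subset> V" using W by auto
  ultimately have "k \<le> out_degree D (V - W)"
    unfolding k_hyperarc_connected_def by simp
  moreover have "V - (V - W) = W" using W by auto
  ultimately show "edges_within E W + k \<le> heads_in D W"
    using out_degree_plus_edges_within[OF assms, of "V - W"] by simp
next
  assume H: "\<forall>W. W \<subseteq> V \<longrightarrow> W \<noteq> {} \<longrightarrow> W \<noteq> V \<longrightarrow> edges_within E W + k \<le> heads_in D W"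
  show "k_hyperarc_connected V k D"
    unfolding k_hyperarc_connected_def
  proof (intro allI impI)
    fix X assume X: "X \<noteq> {} \<and> X \<subset> V"
    then have "V - X \<subseteq> V" "V - X \<noteq> {}" "V - X \<noteq> V" by auto
    then have "edges_within E (V - X) + k \<le> heads_in D (V - X)"
      using H by simp
    then show "k \<le> out_degree D X"
      using out_degree_plus_edges_within[OF assms, of X] by simp
  qed
qed

section \<open>Reversing hyperpaths\<close>

lemma length_reversed_arcs [simp]: "length (reversed_arcs s P) = length P"
  unfolding reversed_arcs_def by simp

lemma nth_reversed_arcs:
  "i < length P \<Longrightarrow>
    reversed_arcs s P ! i = ((fst (P ! i) - {(s # map snd P) ! i}) \<union> {snd (P ! i)}, (s # map snd P) ! i)"
  unfolding reversed_arcs_def by (cases "P ! i") simp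

lemma hyperpath_predecessor_in_tail:
  assumes "hyperpath D s t P" "i < length P"
  shows "(s # map snd P) ! i \<in> fst (P ! i)"
proof (cases i)
  case 0
  then show ?thesis using assms unfolding hyperpath_def by simp
next
  case (Suc j)
  then have "snd (P ! j) \<in> fst (P ! (j + 1))" using assms unfolding hyperpath_def by simp
  then show ?thesis using Suc assms(2) by simp
qed

lemma hyperpath_distinct: "hyperpath D s t P \<Longrightarrow> distinct P"
  unfolding hyperpath_def using distinct_map by blast

lemma mset_subseteq_if_distinct: "distinct xs \<Longrightarrow> set xs \<subseteq> set_mset M \<Longrightarrow> mset xs \<subseteq># M"
  by (metis mset_set_set subset_imp_msubset_mset_set mset_set_set_mset_msubset
      finite_set_mset subset_mset.order_trans)

lemma mset_hyperpath_subseteq: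
  assumes "hyperpath D s t P"
  shows "mset P \<subseteq># D"
  using mset_subseteq_if_distinct[OF hyperpath_distinct[OF assms]] assms unfolding hyperpath_def by simp

lemma map_snd_reversed_arcs:
  assumes "P \<noteq> []"
  shows "map snd (reversed_arcs s P) = s # butlast (map snd P)"
proof (rule nth_equalityI)
  show "length (map snd (reversed_arcs s P)) = length (s # butlast (map snd P))"
    using assms by simp
next
  fix i assume "i < length (map snd (reversed_arcs s P))"
  then show "map snd (reversed_arcs s P) ! i = (s # butlast (map snd P)) ! i"
    by (cases i) (simp_all add: nth_reversed_arcs nth_butlast)
qed

lemma reversed_arcs_edges:
  assumes "is_orientation E D" "hyperpath D s t P"
  shows "map (\<lambda>(A, v). insert v A) (reversed_arcs s P) = map (\<lambda>(A, v). insert v A) P"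
    and "\<forall>(A, v) \<in> set (reversed_arcs s P). v \<notin> A"
proof -
  have arc: "(s # map snd P) ! i \<in> fst (P ! i) \<and> snd (P ! i) \<notin> fst (P ! i)" if "i < length P" for i
  proof -
    have "P ! i \<in># D" using assms(2) that unfolding hyperpath_def by auto
    then show ?thesis using hyperpath_predecessor_in_tail[OF assms(2) that]
      is_orientationD(1)[OF assms(1), of "fst (P ! i)" "snd (P ! i)"] by simp
  qed
  show "map (\<lambda>(A, v). insert v A) (reversed_arcs s P) = map (\<lambda>(A, v). insert v A) P"
  proof (rule nth_equalityI)
    fix i assume "i < length (map (\<lambda>(A, v). insert v A) (reversed_arcs s P))"
    then show "map (\<lambda>(A, v). insert v A) (reversed_arcs s P) ! i = map (\<lambda>(A, v). insert v A) P ! i"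
      using arc[of i] by (auto simp: nth_reversed_arcs case_prod_unfold)
  qed simp
  show "\<forall>(A, v) \<in> set (reversed_arcs s P). v \<notin> A"
  proof
    fix x assume "x \<in> set (reversed_arcs s P)"
    then obtain i where "i < length P" "x = reversed_arcs s P ! i" by (auto simp: in_set_conv_nth)
    then show "case x of (A, v) \<Rightarrow> v \<notin> A" using arc[of i] by (auto simp: nth_reversed_arcs)
  qed
qed

lemma is_orientation_reverse:
  assumes "is_orientation E D" "hyperpath D s t P"
  shows "is_orientation E (D - mset P + mset (reversed_arcs s P))"
proof -
  let ?edge = "\<lambda>(A, v). insert v A"
  have sub: "mset P \<subseteq># D" using mset_hyperpath_subseteq[OF assms(2)] .
  have "image_mset ?edge (mset (reversed_arcs s P)) = image_mset ?edge (mset P)"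
    using reversed_arcs_edges(1)[OF assms] by (metis mset_map)
  then have "image_mset ?edge (D - mset P + mset (reversed_arcs s P))
      = image_mset ?edge D - image_mset ?edge (mset P) + image_mset ?edge (mset P)"
    by (simp only: image_mset_union image_mset_Diff[OF sub])
  also have "\<dots> = image_mset ?edge D"
    by (rule subset_mset.diff_add[OF image_mset_subseteq_mono[OF sub]])
  finally have "image_mset ?edge (D - mset P + mset (reversed_arcs s P)) = image_mset ?edge D" .
  moreover have "\<forall>(A, v)\<in>#D. v \<notin> A" using assms(1) unfolding is_orientation_def by blast
  then have "\<forall>(A, v)\<in>#D - mset P + mset (reversed_arcs s P). v \<notin> A"
    using reversed_arcs_edges(2)[OF assms] by (auto dest: in_diffD)
  ultimately show ?thesis using assms(1) unfolding is_orientation_def by simp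
qed

lemma reverse_step_reverse: "hyperpath D s t P \<Longrightarrow> reverse_step D (D - mset P + mset (reversed_arcs s P))"
  unfolding reverse_step_def by blast

lemma heads_in_mset: "heads_in (mset L) W = length (filter (\<lambda>v. v \<in> W) (map snd L))"
  unfolding heads_in_def by (simp add: length_filter_map comp_def flip: mset_filter)

lemma heads_in_reverse:
  assumes "hyperpath D s t P"
  shows "heads_in (D - mset P + mset (reversed_arcs s P)) W + (if t \<in> W then 1 else 0)
       = heads_in D W + (if s \<in> W then 1 else 0)"
proof -
  have sub: "mset P \<subseteq># D" using mset_hyperpath_subseteq[OF assms] .
  have ne: "P \<noteq> []" and "snd (last P) = t" using assms unfolding hyperpath_def by auto
  then have heads: "map snd P = butlast (map snd P) @ [t]"
    by (metis append_butlast_last_id last_map map_is_Nil_conv)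
  have fsub: "{#a \<in># mset P. snd a \<in> W#} \<subseteq># {#a \<in># D. snd a \<in> W#}"
    using multiset_filter_mono[OF sub] .
  have "heads_in (D - mset P + mset (reversed_arcs s P)) W
      = heads_in D W - heads_in (mset P) W + heads_in (mset (reversed_arcs s P)) W"
    unfolding heads_in_def filter_union_mset filter_diff_mset size_union size_Diff_submset[OF fsub] ..
  moreover have "heads_in (mset P) W \<le> heads_in D W"
    unfolding heads_in_def using size_mset_mono[OF fsub] .
  moreover have "heads_in (mset P) W = length (filter (\<lambda>v. v \<in> W) (butlast (map snd P))) + (if t \<in> W then 1 else 0)"
    unfolding heads_in_mset by (subst heads) simp
  moreover have "heads_in (mset (reversed_arcs s P)) W
      = length (filter (\<lambda>v. v \<in> W) (butlast (map snd P))) + (if s \<in> W then 1 else 0)"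
    unfolding heads_in_mset map_snd_reversed_arcs[OF ne] by simp
  ultimately show ?thesis by simp
qed

section \<open>Tight sets\<close>

definition tight :: "'v set \<Rightarrow> 'v set multiset \<Rightarrow> nat \<Rightarrow> 'v hyperarc multiset \<Rightarrow> 'v set \<Rightarrow> bool" where
  "tight V E k D W \<longleftrightarrow> W \<subseteq> V \<and> W \<noteq> {} \<and> W \<noteq> V \<and> heads_in D W = edges_within E W + k"

text \<open>Only sets containing \<open>t\<close> but not \<open>s\<close> lose a head.\<close>
lemma k_hyperarc_connected_reverse:
  assumes "hypergraph V E" "is_orientation E D" "hyperpath D s t P" "k_hyperarc_connected V k D"
    and "\<forall>W. tight V E k D W \<longrightarrow> t \<in> W \<longrightarrow> s \<in> W"
  shows "k_hyperarc_connected V k (D - mset P + mset (reversed_arcs s P))"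
  unfolding k_hyperarc_connected_iff[OF assms(1) is_orientation_reverse[OF assms(2,3)]]
proof (intro allI impI)
  fix W assume W: "W \<subseteq> V" "W \<noteq> {}" "W \<noteq> V"
  have loose: "edges_within E W + k \<le> heads_in D W"
    using assms(4) W unfolding k_hyperarc_connected_iff[OF assms(1,2)] by simp
  have "edges_within E W + k \<noteq> heads_in D W" if "t \<in> W" "s \<notin> W"
  proof
    assume "edges_within E W + k = heads_in D W"
    then have "tight V E k D W" unfolding tight_def using W by simp
    then show False using assms(5) that by blast
  qed
  with loose have "edges_within E W + k + (if t \<in> W then 1 else 0) \<le> heads_in D W + (if s \<in> W then 1 else 0)"
    by (cases "t \<in> W"; cases "s \<in> W") simp_all
  then show "edges_within E W + k \<le> heads_in (D - mset P + mset (reversed_arcs s P)) W"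
    using heads_in_reverse[OF assms(3), of W] by simp
qed

lemma sum_Union_nonneg_if_closed_under_intersecting_union:
  fixes f :: "'a \<Rightarrow> 'b::ordered_comm_monoid_add"
  assumes "finite T" "\<And>W. W \<in> T \<Longrightarrow> finite W" "\<And>W. W \<in> T \<Longrightarrow> 0 \<le> sum f W"
    and union: "\<And>W1 W2. W1 \<in> T \<Longrightarrow> W2 \<in> T \<Longrightarrow> W1 \<inter> W2 \<noteq> {} \<Longrightarrow> W1 \<union> W2 \<in> T"
  shows "0 \<le> sum f (\<Union>T)"
proof -
  define M where "M = {W \<in> T. \<forall>W'\<in>T. W \<subseteq> W' \<longrightarrow> W = W'}"
  have "\<Union>T \<subseteq> \<Union>M"
  proof
    fix x assume "x \<in> \<Union>T"
    then obtain W where W: "W \<in> T" "x \<in> W" by blast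
    then obtain m where "m \<in> T" "W \<subseteq> m" "\<forall>W'\<in>T. m \<subseteq> W' \<longrightarrow> m = W'"
      using finite_has_maximal2[OF assms(1) W(1)] by blast
    then have "m \<in> M" "x \<in> m" using W(2) unfolding M_def by auto
    then show "x \<in> \<Union>M" by blast
  qed
  then have "\<Union>T = \<Union>M" unfolding M_def by blast
  moreover have "\<forall>A\<in>M. \<forall>B\<in>M. A \<noteq> B \<longrightarrow> A \<inter> B = {}"
  proof (intro ballI impI)
    fix A B assume AB: "A \<in> M" "B \<in> M" "A \<noteq> B"
    show "A \<inter> B = {}"
    proof (rule ccontr)
      assume "A \<inter> B \<noteq> {}"
      then have "A \<union> B \<in> T" using union AB(1,2) unfolding M_def by simp
      moreover have "\<forall>W'\<in>T. A \<subseteq> W' \<longrightarrow> A = W'" "\<forall>W'\<in>T. B \<subseteq> W' \<longrightarrow> B = W'"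
        using AB(1,2) unfolding M_def by simp_all
      ultimately have "A = A \<union> B" "B = A \<union> B" by auto
      then show False using AB(3) by simp
    qed
  qed
  moreover have "\<forall>A\<in>M. finite A" using assms(2) unfolding M_def by simp
  ultimately have "sum f (\<Union>T) = sum (sum f) M"
    using sum.Union_disjoint[of M f] by simp
  moreover have "0 \<le> sum (sum f) M"
    by (rule sum_nonneg) (use assms(3) in \<open>simp add: M_def\<close>)
  ultimately show ?thesis by simp
qed

lemma tight_union:
  assumes "hypergraph V E" "is_orientation E D" "k_hyperarc_connected V k D"
    and "tight V E k D W1" "tight V E k D W2" "W1 \<inter> W2 \<noteq> {}" "W1 \<union> W2 \<noteq> V"
  shows "tight V E k D (W1 \<union> W2)"
proof -
  have loose: "edges_within E W + k \<le> heads_in D W" if "W \<subseteq> V" "W \<noteq> {}" "W \<noteq> V" for W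
    using assms(3) that unfolding k_hyperarc_connected_iff[OF assms(1,2)] by simp
  have W1: "W1 \<subseteq> V" "W1 \<noteq> V" "heads_in D W1 = edges_within E W1 + k"
    and W2: "W2 \<subseteq> V" "heads_in D W2 = edges_within E W2 + k"
    using assms(4,5) unfolding tight_def by simp_all
  have "W1 \<inter> W2 \<noteq> V" using W1 by blast
  then have "edges_within E (W1 \<inter> W2) + k \<le> heads_in D (W1 \<inter> W2)"
    using W1(1) assms(6) by (intro loose) auto
  moreover have "edges_within E (W1 \<union> W2) + k \<le> heads_in D (W1 \<union> W2)"
    using W1(1) W2(1) assms(6,7) by (intro loose) auto
  ultimately have "heads_in D (W1 \<union> W2) = edges_within E (W1 \<union> W2) + k"
    using W1(3) W2(2) heads_in_union_inter[of D W1 W2] edges_within_supermodular[of E W1 W2]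
    by linarith
  then show ?thesis unfolding tight_def using W1(1) W2(1) assms(6,7) by auto
qed

text \<open>Uncrossing: the tight sets avoiding \<open>s\<close> that meet a common vertex merge, so their union
  \<open>U\<close> has at least as many heads in \<open>D'\<close> as in \<open>D\<close>; as \<open>s\<close> has a surplus in \<open>D'\<close> and the
  totals agree, some vertex outside \<open>U\<close> has a surplus in \<open>D\<close>.\<close>
lemma surplus_vertex_not_cut_by_tight_set:
  assumes hyp: "hypergraph V E" and o: "is_orientation E D" "is_orientation E D'"
    and kc: "k_hyperarc_connected V k D" "k_hyperarc_connected V k D'"
    and s: "s \<in> V" "heads_in D {s} < heads_in D' {s}"
  shows "\<exists>t. heads_in D' {t} < heads_in D {t} \<and> (\<forall>W. tight V E k D W \<longrightarrow> t \<in> W \<longrightarrow> s \<in> W)"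
proof (rule ccontr)
  assume contra: "\<not> ?thesis"
  have finV: "finite V" using hyp unfolding hypergraph_def by simp
  define T where "T = {W. tight V E k D W \<and> s \<notin> W}"
  define \<phi> where "\<phi> v = int (heads_in D' {v}) - int (heads_in D {v})" for v
  have T_sub: "W \<subseteq> V" if "W \<in> T" for W using that unfolding T_def tight_def by simp
  have T_fin: "finite W" if "W \<in> T" for W using finite_subset[OF T_sub[OF that] finV] .
  have \<phi>_sum: "sum \<phi> W = int (heads_in D' W) - int (heads_in D W)" if "W \<subseteq> V" for W
    using heads_in_sum_singletons[OF finite_subset[OF that finV]]
    by (simp add: \<phi>_def sum_subtractf)
  have T_nonneg: "0 \<le> sum \<phi> W" if "W \<in> T" for W
  proof -
    have "W \<subseteq> V" "W \<noteq> {}" "W \<noteq> V" "heads_in D W = edges_within E W + k"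
      using that unfolding T_def tight_def by simp_all
    moreover have "edges_within E W + k \<le> heads_in D' W"
      using kc(2) calculation unfolding k_hyperarc_connected_iff[OF hyp o(2)] by simp
    ultimately show ?thesis using \<phi>_sum by simp
  qed
  have T_union: "W1 \<union> W2 \<in> T" if "W1 \<in> T" "W2 \<in> T" "W1 \<inter> W2 \<noteq> {}" for W1 W2
  proof -
    have "W1 \<union> W2 \<noteq> V" using that s(1) unfolding T_def by blast
    then show ?thesis using tight_union[OF hyp o(1) kc(1)] that unfolding T_def by simp
  qed
  have "finite T" using finite_subset[of T "Pow V"] T_sub finV by blast
  then have U: "0 \<le> sum \<phi> (\<Union>T)"
    using T_fin T_nonneg T_union
    by (rule sum_Union_nonneg_if_closed_under_intersecting_union)
  have "0 \<le> \<phi> v" if "v \<in> V - \<Union>T" for v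
  proof (rule ccontr)
    assume "\<not> 0 \<le> \<phi> v"
    then have "heads_in D' {v} < heads_in D {v}" unfolding \<phi>_def by simp
    then obtain W where "tight V E k D W" "v \<in> W" "s \<notin> W" using contra by blast
    then show False using that unfolding T_def by blast
  qed
  moreover have "s \<in> V - \<Union>T" using s(1) unfolding T_def by blast
  ultimately have "\<phi> s \<le> sum \<phi> (V - \<Union>T)"
    by (intro member_le_sum) (simp_all add: finV)
  moreover have "0 < \<phi> s" using s(2) unfolding \<phi>_def by simp
  moreover have "sum \<phi> V = 0"
    using \<phi>_sum[of V] heads_in_vertices[OF hyp o(1)] heads_in_vertices[OF hyp o(2)] by simp
  moreover have "sum \<phi> V = sum \<phi> (V - \<Union>T) + sum \<phi> (\<Union>T)"
    using sum.subset_diff[of "\<Union>T" V \<phi>] T_sub finV by blast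
  ultimately show False using U by linarith
qed

section \<open>Hyperpaths and hypercycles\<close>

lemma hyperpath_prefix:
  assumes "hyperpath D s t P" "i < length P"
  shows "hyperpath D s (snd (P ! i)) (take (Suc i) P)"
proof -
  have "length (take (Suc i) P) = Suc i" using assms(2) by simp
  then show ?thesis
    using assms unfolding hyperpath_def by (auto simp: last_conv_nth dest: in_set_takeD simp flip: take_map)
qed

lemma hyperpath_snoc:
  assumes "hyperpath D s u P" "(Y, w) \<in># D" "u \<in> Y" "w \<notin> snd ` set P"
  shows "hyperpath D s w (P @ [(Y, w)])"
proof -
  have "P \<noteq> []" "snd (last P) = u" using assms(1) unfolding hyperpath_def by simp_all
  then have "snd (P ! i) \<in> fst ((P @ [(Y, w)]) ! (i + 1))" if "i + 1 = length P" for i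
  proof -
    have "length P - 1 = i" using that by simp
    then show ?thesis using that assms(3) \<open>P \<noteq> []\<close> \<open>snd (last P) = u\<close>
      by (simp add: last_conv_nth nth_append)
  qed
  then show ?thesis
    using assms unfolding hyperpath_def by (auto simp: nth_append)
qed

lemma hyperpath_singleton: "(Y, w) \<in># D \<Longrightarrow> s \<in> Y \<Longrightarrow> hyperpath D s w [(Y, w)]"
  unfolding hyperpath_def by simp

text \<open>The vertices reachable from \<open>s\<close> by hyperpaths, together with \<open>s\<close>, form a set with no
  leaving hyperarc.\<close>
lemma hyperpath_exists:
  assumes hyp: "hypergraph V E" and o: "is_orientation E D" and kc: "k_hyperarc_connected V k D"
    and "1 \<le> k" "s \<in> V" "t \<in> V" "s \<noteq> t"
  shows "\<exists>P. hyperpath D s t P"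
proof (rule ccontr)
  assume no_path: "\<nexists>P. hyperpath D s t P"
  define X where "X = insert s {v. \<exists>P. hyperpath D s v P}"
  have "X \<subseteq> V"
  proof -
    have "v \<in> V" if "hyperpath D s v P" for v P
    proof -
      have "(fst (last P), snd (last P)) \<in># D" "snd (last P) = v"
        using that unfolding hyperpath_def by auto
      then show ?thesis using orientation_arc_in_vertices(1)[OF hyp o] by blast
    qed
    then show ?thesis unfolding X_def using assms(5) by blast
  qed
  moreover have "t \<notin> X" unfolding X_def using no_path assms(7) by blast
  ultimately have "X \<noteq> {}" "X \<subset> V" using assms(6) unfolding X_def by auto
  then have "out_degree D X \<noteq> 0"
    using spec[OF kc[unfolded k_hyperarc_connected_def], of X] assms(4) by simp
  then obtain Y w where Yw: "(Y, w) \<in># D" "w \<notin> X" "Y \<inter> X \<noteq> {}"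
    unfolding out_degree_def by (auto simp: size_eq_0_iff_empty filter_mset_eq_conv)
  then obtain u where u: "u \<in> Y" "u \<in> X" by blast
  have "\<exists>P. hyperpath D s w P"
  proof (cases "u = s")
    case True
    then show ?thesis using hyperpath_singleton[OF Yw(1)] u(1) by blast
  next
    case False
    then obtain P where P: "hyperpath D s u P" using u(2) unfolding X_def by blast
    have "w \<notin> snd ` set P"
    proof
      assume "w \<in> snd ` set P"
      then obtain i where "i < length P" "w = snd (P ! i)" by (auto simp: in_set_conv_nth)
      then have "w \<in> X" using hyperpath_prefix[OF P] unfolding X_def by blast
      then show False using Yw(2) by simp
    qed
    then show ?thesis using hyperpath_snoc[OF P Yw(1) u(1)] by blast
  qed
  then show False using Yw(2) unfolding X_def by blast
qed

lemma hyperpath_walk: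
  assumes "0 < n" "\<And>j. j < n \<Longrightarrow> (B j, y (Suc j)) \<in># D" "\<And>j. j < n \<Longrightarrow> y j \<in> B j"
    and "inj_on y {1..n}"
  shows "hyperpath D (y 0) (y n) (map (\<lambda>j. (B j, y (Suc j))) [0..<n])"
  unfolding hyperpath_def
proof (intro conjI allI impI)
  let ?P = "map (\<lambda>j. (B j, y (Suc j))) [0..<n]"
  show "?P \<noteq> []" "y 0 \<in> fst (?P ! 0)" using assms(1,3) by simp_all
  show "set ?P \<subseteq> set_mset D" using assms(2) by auto
  show "snd (last ?P) = y n" using assms(1) by (simp add: last_map)
  have "Suc ` {0..<n} = {1..n}"
    by (simp add: image_Suc_atLeastLessThan atLeastLessThanSuc_atLeastAtMost)
  then have "inj_on (y \<circ> Suc) {0..<n}" using assms(4) by (intro comp_inj_on) simp_all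
  then show "distinct (map snd ?P)" by (simp add: distinct_map comp_def)
  fix i assume "i + 1 < length ?P"
  then show "snd (?P ! i) \<in> fst (?P ! (i + 1))" using assms(3)[of "Suc i"] by simp
qed

lemma reversed_arcs_walk:
  "reversed_arcs (y 0) (map (\<lambda>j. (B j, y (Suc j))) [0..<n])
    = map (\<lambda>j. ((B j - {y j}) \<union> {y (Suc j)}, y j)) [0..<n]"
proof (rule nth_equalityI)
  fix j assume "j < length (reversed_arcs (y 0) (map (\<lambda>j. (B j, y (Suc j))) [0..<n]))"
  then have "j < n" by simp
  moreover have "(y 0 # map snd (map (\<lambda>j. (B j, y (Suc j))) [0..<n])) ! j = y j"
    using \<open>j < n\<close> by (cases j) simp_all
  ultimately show "reversed_arcs (y 0) (map (\<lambda>j. (B j, y (Suc j))) [0..<n]) ! j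
      = map (\<lambda>j. ((B j - {y j}) \<union> {y (Suc j)}, y j)) [0..<n] ! j"
    by (simp add: nth_reversed_arcs)
qed simp

text \<open>Take the least period of the eventually periodic orbit of \<open>v0\<close>.\<close>
lemma funpow_cycle_exists:
  assumes "finite H" "v0 \<in> H" "f ` H \<subseteq> H"
  shows "\<exists>v\<in>H. \<exists>n>0. (f ^^ n) v = v \<and> inj_on (\<lambda>i. (f ^^ i) v) {..<n}"
proof -
  define x where "x m = (f ^^ m) v0" for m
  have x_in: "x m \<in> H" for m
    unfolding x_def by (induction m) (use assms(2,3) in auto)
  then have "\<not> inj_on x {0..card H}"
    using card_mono[OF assms(1), of "x ` {0..card H}"] card_image by fastforce
  then obtain i j where "i < j" "x i = x j"
    unfolding inj_on_def by (metis linorder_neqE_nat)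
  then have "\<exists>d>0. \<exists>i. x i = x (i + d)" by (metis add_diff_inverse_nat less_imp_not_less zero_less_diff)
  define n where "n = (LEAST d. 0 < d \<and> (\<exists>i. x i = x (i + d)))"
  obtain i0 where n: "0 < n" "x i0 = x (i0 + n)"
    using LeastI_ex[OF \<open>\<exists>d>0. \<exists>i. x i = x (i + d)\<close>] unfolding n_def by blast
  have n_least: "n \<le> d" if "0 < d" "x i = x (i + d)" for d i
    unfolding n_def using that by (blast intro: Least_le)
  have orbit: "(f ^^ m) (x i0) = x (i0 + m)" for m
    unfolding x_def add.commute[of i0] funpow_add by simp
  have "inj_on (\<lambda>i. (f ^^ i) (x i0)) {..<n}"
  proof (rule inj_onI)
    fix a b assume ab: "a \<in> {..<n}" "b \<in> {..<n}" "(f ^^ a) (x i0) = (f ^^ b) (x i0)"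
    show "a = b"
    proof (rule ccontr)
      assume "a \<noteq> b"
      then consider "a < b" | "b < a" by linarith
      then show False
      proof cases
        case 1
        then have "x (i0 + a) = x (i0 + a + (b - a))" using ab(3) orbit by simp
        then show False using n_least[of "b - a" "i0 + a"] 1 ab(2) by simp
      next
        case 2
        then have "x (i0 + b) = x (i0 + b + (a - b))" using ab(3) orbit by simp
        then show False using n_least[of "a - b" "i0 + b"] 2 ab(1) by simp
      qed
    qed
  qed
  moreover have "(f ^^ n) (x i0) = x i0" using orbit n(2) by simp
  ultimately show ?thesis using x_in n(1) by blast
qed

lemma image_mset_edges_diff:
  assumes "is_orientation E D" "is_orientation E D'"
  shows "image_mset (\<lambda>(A, v). insert v A) (D - D') = image_mset (\<lambda>(A, v). insert v A) (D' - D)"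
proof -
  let ?edge = "\<lambda>(A, v). insert v A"
  have "D = (D - D') + (D \<inter># D')" "D' = (D' - D) + (D \<inter># D')"
    by (simp_all add: multiset_eq_iff min_def)
  then have "image_mset ?edge (D - D') + image_mset ?edge (D \<inter># D')
      = image_mset ?edge (D' - D) + image_mset ?edge (D \<inter># D')"
    using assms unfolding is_orientation_def by (metis image_mset_union)
  then show ?thesis by simp
qed

lemma partner_arc:
  assumes "is_orientation E D" "is_orientation E D'" "(A, v) \<in># D' - D"
  shows "\<exists>B w. (B, w) \<in># D - D' \<and> v \<in> B \<and> A = (B - {v}) \<union> {w}"
proof -
  have "insert v A \<in># image_mset (\<lambda>(A, v). insert v A) (D - D')"
    using imageI[OF assms(3), of "\<lambda>(A, v). insert v A"] image_mset_edges_diff[OF assms(1,2)] by simp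
  then obtain B w where Bw: "(B, w) \<in># D - D'" "insert v A = insert w B" by auto
  have "v \<notin> A" "w \<notin> B"
    using is_orientationD(1)[OF assms(2) in_diffD[OF assms(3)]]
      is_orientationD(1)[OF assms(1) in_diffD[OF Bw(1)]] by simp_all
  moreover have "(A, v) \<noteq> (B, w)" using assms(3) Bw(1) by (auto simp: in_diff_count)
  ultimately have "v \<noteq> w" using Bw(2) by (metis insert_ident)
  have "v \<in> insert w B" unfolding Bw(2)[symmetric] by simp
  with \<open>v \<noteq> w\<close> have "v \<in> B" by simp
  moreover have "A = insert w B - {v}"
    unfolding Bw(2)[symmetric] using \<open>v \<notin> A\<close> by simp
  then have "A = (B - {v}) \<union> {w}" using \<open>v \<noteq> w\<close> by auto
  ultimately show ?thesis using Bw(1) by blast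
qed

lemma diff_orientations_nonempty:
  assumes "is_orientation E D" "is_orientation E D'" "D \<noteq> D'"
  shows "D' - D \<noteq> {#}"
proof
  assume "D' - D = {#}"
  then have "D - D' = {#}" using image_mset_edges_diff[OF assms(1,2)] by simp
  with \<open>D' - D = {#}\<close> show False
    using assms(3) by (simp add: Diff_eq_empty_iff_mset subset_mset.antisym)
qed

lemma reversible_arc_exists:
  assumes "is_orientation E D" "is_orientation E D'" "D \<noteq> D'"
  shows "\<exists>s t P. hyperpath D s t P \<and> mset P \<subseteq># D - D' \<and> mset (reversed_arcs s P) \<subseteq># D' - D"
proof -
  obtain A v where Av: "(A, v) \<in># D' - D"
    using diff_orientations_nonempty[OF assms] by (metis multiset_nonemptyE surj_pair)
  then obtain B w where Bw: "(B, w) \<in># D - D'" "v \<in> B" "A = (B - {v}) \<union> {w}"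
    using partner_arc[OF assms(1,2)] by blast
  have "hyperpath D v w [(B, w)]" using hyperpath_singleton[OF in_diffD[OF Bw(1)] Bw(2)] .
  moreover have "reversed_arcs v [(B, w)] = [(A, v)]" unfolding reversed_arcs_def Bw(3) by simp
  ultimately show ?thesis using Av Bw(1) by fastforce
qed

lemma hypercycle_of_successor_map:
  assumes "finite H" "v0 \<in> H" "f ` H \<subseteq> H" "M \<subseteq># D"
    and arcs: "\<And>v. v \<in> H \<Longrightarrow> (B v, f v) \<in># M \<and> v \<in> B v \<and> ((B v - {v}) \<union> {f v}, v) \<in># N"
  shows "\<exists>s P. hyperpath D s s P \<and> mset P \<subseteq># M \<and> mset (reversed_arcs s P) \<subseteq># N"
proof -
  obtain v n where cyc: "v \<in> H" "0 < n" "(f ^^ n) v = v" "inj_on (\<lambda>i. (f ^^ i) v) {..<n}"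
    using funpow_cycle_exists[OF assms(1-3)] by blast
  define y where "y i = (f ^^ i) v" for i
  have "y i \<in> H" for i unfolding y_def by (induction i) (use cyc(1) assms(3) in auto)
  then have arc: "(B (y j), y (Suc j)) \<in># M" "y j \<in> B (y j)"
    "((B (y j) - {y j}) \<union> {y (Suc j)}, y j) \<in># N" for j
    using arcs unfolding y_def by simp_all
  have "y 0 = v" "y n = v" using cyc(3) unfolding y_def by simp_all
  have inj: "inj_on y {..<n}" using cyc(4) unfolding y_def .
  have "inj_on y {1..n}"
  proof (rule inj_onI)
    fix a b assume ab: "a \<in> {1..n}" "b \<in> {1..n}" "y a = y b"
    have "y (a mod n) = y a" "y (b mod n) = y b"
      using ab(1,2) \<open>y 0 = v\<close> \<open>y n = v\<close> by (auto simp: le_less)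
    then have "a mod n = b mod n" using inj ab(3) cyc(2) unfolding inj_on_def by simp
    then show "a = b" using ab(1,2) by (auto simp: le_less)
  qed
  then have path: "hyperpath D v v (map (\<lambda>j. (B (y j), y (Suc j))) [0..<n])"
    using hyperpath_walk[of n "\<lambda>j. B (y j)" y D] cyc(2) arc(1,2) mset_subset_eqD[OF assms(4)]
      \<open>y 0 = v\<close> \<open>y n = v\<close> by metis
  have "mset (map (\<lambda>j. (B (y j), y (Suc j))) [0..<n]) \<subseteq># M"
    using hyperpath_distinct[OF path] arc(1) by (intro mset_subseteq_if_distinct) auto
  moreover have "mset (map (\<lambda>j. ((B (y j) - {y j}) \<union> {y (Suc j)}, y j)) [0..<n]) \<subseteq># N"
    using inj arc(3) by (intro mset_subseteq_if_distinct) (auto simp: distinct_map inj_on_def)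
  ultimately show ?thesis
    using path reversed_arcs_walk[of y "\<lambda>j. B (y j)" n] \<open>y 0 = v\<close> by metis
qed

text \<open>With equal in-degrees, the partner of an arc \<open>(A, v)\<close> of \<open>D' - D\<close> has \<open>v\<close> in its tail
  and its head again among the heads of \<open>D' - D\<close>.\<close>
lemma reversible_cycle_exists:
  assumes o: "is_orientation E D" "is_orientation E D'"
    and heads: "\<And>v. heads_in D {v} = heads_in D' {v}" and "D \<noteq> D'"
  shows "\<exists>s P. hyperpath D s s P \<and> mset P \<subseteq># D - D' \<and> mset (reversed_arcs s P) \<subseteq># D' - D"
proof -
  define H where "H = snd ` set_mset (D' - D)"
  have diff_heads: "heads_in (D - D') {v} = heads_in (D' - D) {v}" for v
  proof -
    have "D = (D - D') + (D \<inter># D')" "D' = (D' - D) + (D \<inter># D')"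
      by (simp_all add: multiset_eq_iff min_def)
    then have "heads_in (D - D') {v} + heads_in (D \<inter># D') {v} = heads_in (D' - D) {v} + heads_in (D \<inter># D') {v}"
      using heads[of v] by (metis heads_in_plus)
    then show ?thesis by simp
  qed
  have "\<exists>p. (fst p, snd p) \<in># D - D' \<and> v \<in> fst p \<and> ((fst p - {v}) \<union> {snd p}, v) \<in># D' - D \<and> snd p \<in> H"
    if v: "v \<in> H" for v
  proof -
    obtain A where A: "(A, v) \<in># D' - D" using v unfolding H_def by force
    then obtain B w where Bw: "(B, w) \<in># D - D'" "v \<in> B" "A = (B - {v}) \<union> {w}"
      using partner_arc[OF o] by blast
    then have "0 < heads_in (D' - D) {w}"
      unfolding diff_heads[symmetric] heads_in_pos_iff by force
    then have "w \<in> H" unfolding heads_in_pos_iff H_def by force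
    then show ?thesis using A Bw by (intro exI[of _ "(B, w)"]) simp
  qed
  then obtain g where g: "\<And>v. v \<in> H \<Longrightarrow> (fst (g v), snd (g v)) \<in># D - D' \<and> v \<in> fst (g v)
      \<and> ((fst (g v) - {v}) \<union> {snd (g v)}, v) \<in># D' - D \<and> snd (g v) \<in> H"
    by metis
  obtain v0 where "v0 \<in> H" using diff_orientations_nonempty[OF o \<open>D \<noteq> D'\<close>] unfolding H_def
    by (metis image_eqI multiset_nonemptyE)
  moreover have "finite H" "(\<lambda>v. snd (g v)) ` H \<subseteq> H" using g unfolding H_def by auto
  ultimately show ?thesis
    using g by (intro hypercycle_of_successor_map[where B = "\<lambda>v. fst (g v)"]) auto
qed

section \<open>Reconfiguration\<close>

lemma size_diff_reverse_less:
  assumes "mset P \<subseteq># D - D'" "mset P' \<subseteq># D' - D" "P \<noteq> []"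
  shows "size (D - mset P + mset P' - D') < size (D - D')"
proof -
  have eq: "D - mset P + mset P' - D' = (D - D') - mset P"
  proof (rule multiset_eqI)
    fix x
    have "count (mset P) x \<le> count D x - count D' x" "count (mset P') x \<le> count D' x - count D x"
      using assms(1,2) unfolding subseteq_mset_def by (metis count_diff)+
    then show "count (D - mset P + mset P' - D') x = count (D - D' - mset P) x" by simp
  qed
  have "size (D - D' - mset P) = size (D - D') - size (mset P)"
    by (rule size_Diff_submset[OF assms(1)])
  moreover have "size (mset P) \<le> size (D - D')" using size_mset_mono[OF assms(1)] .
  moreover have "0 < size (mset P)" using assms(3) by simp
  ultimately show ?thesis unfolding eq by linarith
qed

lemma heads_in_eq_if_dominated:
  assumes hyp: "hypergraph V E" and o: "is_orientation E D" "is_orientation E D'"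
    and le: "\<forall>v\<in>V. heads_in D' {v} \<le> heads_in D {v}"
  shows "heads_in D {v} = heads_in D' {v}"
proof (cases "v \<in> V")
  case True
  have finV: "finite V" using hyp unfolding hypergraph_def by simp
  have "(\<Sum>v\<in>V. heads_in D {v}) = (\<Sum>v\<in>V. heads_in D' {v})"
    using heads_in_vertices[OF hyp o(1)] heads_in_vertices[OF hyp o(2)]
      heads_in_sum_singletons[OF finV, of D] heads_in_sum_singletons[OF finV, of D'] by simp
  then show ?thesis
    using sum_strict_mono_ex1[OF finV le] le True by (metis le_neq_implies_less less_irrefl)
next
  case False
  then show ?thesis using heads_in_outside_vertices[OF hyp] o by simp
qed

definition heads_deficit :: "'v set \<Rightarrow> 'v hyperarc multiset \<Rightarrow> 'v hyperarc multiset \<Rightarrow> nat" where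
  "heads_deficit V D' D = (\<Sum>v\<in>V. heads_in D' {v} - heads_in D {v})"

lemma heads_deficit_reverse:
  assumes "finite V" "hyperpath D s t P" "s \<in> V" "s \<noteq> t"
    and "heads_in D {s} < heads_in D' {s}" "heads_in D' {t} < heads_in D {t}"
  shows "heads_deficit V D' (D - mset P + mset (reversed_arcs s P)) + 1 = heads_deficit V D' D"
proof -
  let ?D'' = "D - mset P + mset (reversed_arcs s P)"
  have vertexwise: "(heads_in D' {v} - heads_in ?D'' {v}) + (if v = s then 1 else 0)
      = heads_in D' {v} - heads_in D {v}" for v
    using heads_in_reverse[OF assms(2), of "{v}"] assms(4-6) by (cases "v = s"; cases "v = t") auto
  have "heads_deficit V D' ?D'' + 1
      = (\<Sum>v\<in>V. (heads_in D' {v} - heads_in ?D'' {v}) + (if v = s then 1 else 0))"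
    unfolding heads_deficit_def sum.distrib using assms(1,3) by simp
  also have "\<dots> = heads_deficit V D' D" unfolding heads_deficit_def vertexwise ..
  finally show ?thesis .
qed

lemma reverse_step_towards_k0:
  assumes "is_orientation E D" "is_orientation E D'" "D \<noteq> D'"
  shows "\<exists>D''. reverse_step D D'' \<and> is_orientation E D'' \<and> size (D'' - D') < size (D - D')"
proof -
  obtain s t P where P: "hyperpath D s t P" "mset P \<subseteq># D - D'" "mset (reversed_arcs s P) \<subseteq># D' - D"
    using reversible_arc_exists[OF assms] by blast
  moreover have "P \<noteq> []" using P(1) unfolding hyperpath_def by simp
  ultimately have "size (D - mset P + mset (reversed_arcs s P) - D') < size (D - D')"
    by (intro size_diff_reverse_less)
  then show ?thesis
    using reverse_step_reverse[OF P(1)] is_orientation_reverse[OF assms(1) P(1)] by blast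
qed

text \<open>Either the in-degrees agree and a cycle of \<open>D - D'\<close> is reversed, or a hyperpath from a
  deficient vertex to a surplus vertex reduces the deficit.\<close>
lemma reverse_step_towards:
  assumes hyp: "hypergraph V E" and o: "is_orientation E D" "is_orientation E D'"
    and kc: "k_hyperarc_connected V k D" "k_hyperarc_connected V k D'" and "1 \<le> k" "D \<noteq> D'"
  shows "\<exists>D''. reverse_step D D'' \<and> is_orientation E D'' \<and> k_hyperarc_connected V k D''
    \<and> (D'', D) \<in> measures [heads_deficit V D', \<lambda>D. size (D - D')]"
proof (cases "\<forall>v\<in>V. heads_in D' {v} \<le> heads_in D {v}")
  case True
  obtain s P where P: "hyperpath D s s P" "mset P \<subseteq># D - D'" "mset (reversed_arcs s P) \<subseteq># D' - D"
    using reversible_cycle_exists[OF o heads_in_eq_if_dominated[OF hyp o True] \<open>D \<noteq> D'\<close>] by blast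
  define D'' where "D'' = D - mset P + mset (reversed_arcs s P)"
  have "heads_in D'' {v} = heads_in D {v}" for v
    using heads_in_reverse[OF P(1), of "{v}"] unfolding D''_def by simp
  then have "heads_deficit V D' D'' = heads_deficit V D' D" unfolding heads_deficit_def by simp
  moreover have "P \<noteq> []" using P(1) unfolding hyperpath_def by simp
  then have "size (D'' - D') < size (D - D')"
    using P(2,3) unfolding D''_def by (intro size_diff_reverse_less)
  moreover have "k_hyperarc_connected V k D''"
    unfolding D''_def using k_hyperarc_connected_reverse[OF hyp o(1) P(1) kc(1)] by blast
  ultimately show ?thesis
    using reverse_step_reverse[OF P(1)] is_orientation_reverse[OF o(1) P(1)] unfolding D''_def by auto
next
  case False
  then obtain s where s: "s \<in> V" "heads_in D {s} < heads_in D' {s}" by (auto simp: not_le)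
  obtain t where t: "heads_in D' {t} < heads_in D {t}" "\<forall>W. tight V E k D W \<longrightarrow> t \<in> W \<longrightarrow> s \<in> W"
    using surplus_vertex_not_cut_by_tight_set[OF hyp o kc s] by blast
  have "t \<in> V" using t(1) heads_in_outside_vertices[OF hyp o(1)] by fastforce
  moreover have "s \<noteq> t" using s(2) t(1) by auto
  ultimately obtain P where P: "hyperpath D s t P"
    using hyperpath_exists[OF hyp o(1) kc(1) \<open>1 \<le> k\<close> s(1)] by blast
  define D'' where "D'' = D - mset P + mset (reversed_arcs s P)"
  have "finite V" using hyp unfolding hypergraph_def by simp
  then have "heads_deficit V D' D'' < heads_deficit V D' D"
    using heads_deficit_reverse[OF _ P s(1) \<open>s \<noteq> t\<close> s(2) t(1)] unfolding D''_def by simp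
  moreover have "k_hyperarc_connected V k D''"
    unfolding D''_def by (rule k_hyperarc_connected_reverse[OF hyp o(1) P kc(1) t(2)])
  ultimately show ?thesis
    using reverse_step_reverse[OF P] is_orientation_reverse[OF o(1) P] unfolding D''_def by auto
qed

lemma chain_to_target_by_wf_steps:
  assumes "wf r" "Q x"
    and step: "\<And>x. Q x \<Longrightarrow> x \<noteq> y \<Longrightarrow> \<exists>x'. Q x' \<and> R x x' \<and> (x', x) \<in> r"
  shows "\<exists>xs. xs \<noteq> [] \<and> hd xs = x \<and> last xs = y \<and> (\<forall>z\<in>set xs. Q z)
    \<and> (\<forall>i. i + 1 < length xs \<longrightarrow> R (xs ! i) (xs ! (i + 1)))"
  using assms(2)
proof (induction x rule: wf_induct_rule[OF assms(1)])
  case (1 x)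
  show ?case
  proof (cases "x = y")
    case True
    then show ?thesis using 1(2) by (intro exI[of _ "[x]"]) simp
  next
    case False
    then obtain x' where x': "Q x'" "R x x'" "(x', x) \<in> r" using step 1(2) by blast
    then obtain xs where xs: "xs \<noteq> []" "hd xs = x'" "last xs = y" "\<forall>z\<in>set xs. Q z"
      "\<forall>i. i + 1 < length xs \<longrightarrow> R (xs ! i) (xs ! (i + 1))"
      using 1(1) by blast
    have "R ((x # xs) ! i) ((x # xs) ! (i + 1))" if "i + 1 < length (x # xs)" for i
      using that xs(1,2,5) x'(2) by (cases i) (auto simp: hd_conv_nth)
    then show ?thesis using xs 1(2) by (intro exI[of _ "x # xs"]) simp
  qed
qed

theorem mainTheorem3:
  fixes V :: "'v set" and E :: "'v set multiset" and k :: nat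
    and O1 O2 :: "'v hyperarc multiset"
  assumes "hypergraph V E"
    and "is_orientation E O1" and "k_hyperarc_connected V k O1"
    and "is_orientation E O2" and "k_hyperarc_connected V k O2"
  shows "\<exists>Os :: 'v hyperarc multiset list.
           Os \<noteq> [] \<and> hd Os = O1 \<and> last Os = O2 \<and>
           (\<forall>D\<in>set Os. is_orientation E D \<and> k_hyperarc_connected V k D) \<and>
           (\<forall>i. i + 1 < length Os \<longrightarrow> reverse_step (Os ! i) (Os ! (i + 1)))"
proof (cases "k = 0")
  case True
  then have "k_hyperarc_connected V k D" for D unfolding k_hyperarc_connected_def by simp
  then show ?thesis
    using reverse_step_towards_k0[OF _ assms(4)] assms(2)
    by (intro chain_to_target_by_wf_steps[where r = "measure (\<lambda>D. size (D - O2))"]) auto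
next
  case False
  then show ?thesis
    using reverse_step_towards[OF assms(1) _ assms(4) _ assms(5)] assms(2,3)
    by (intro chain_to_target_by_wf_steps[where r = "measures [heads_deficit V O2, \<lambda>D. size (D - O2)]"])
      auto
qed

end
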